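(* Let $n\in\mathbb N^+$. For every $N\in\mathbb N^+$, no solution $k$ of $$-\frac{1}{2^{n+1}-1}\tan\Big(\frac k2\Big)=\tan(Nk),\qquad k\in(0,\pi),$$ lies in $\pi\mathbb Q$. *)

theory Defs
  imports "HOL-Analysis.Analysis"
begin

end

theory Submission
  imports Defs "Jordan_Normal_Form.Char_Poly"
begin

(* Suppose k = pi a / b and put w = exp (i k / 2), a root of unity of order dividing 4 b. Writing
   the tangents through sines, the equation becomes the relation
     2^n (w^(4N+2) - 1) + (2^n - 1) w^2 (v - 1) = 0,   where v = w^(4N-2),
   in the ring Z[w]. As 2^n - 1 is odd and w is a unit, v is congruent to 1 modulo 2 Z[w].
   Elements of Z[w] are algebraic integers, so 2 is not a unit of Z[w]; from this one gets that a
   root of unity in Z[w] congruent to 1 modulo 2 is +1 or -1. For v = 1 the relation gives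
   w^4 = 1, i.e. sin k = 0. The case v = -1 is impossible: for n >= 2 the relation reduced
   modulo 2 would make 1 even, and for n = 1 it makes w^2 a primitive cube root of unity, whose
   odd power v cannot be -1. *)

lemma power_neq_minus_one_if_cube_root:
  fixes u :: "'a :: field_char_0"
  assumes "u ^ 2 + u + 1 = 0"
  shows "u ^ j \<noteq> - 1"
proof
  assume minus_one: "u ^ j = - 1"
  have "u ^ 3 - 1 = (u - 1) * (u ^ 2 + u + 1)"
    by (simp add: algebra_simps power2_eq_square power3_eq_cube)
  then have "u ^ 3 = 1"
    using assms by simp
  moreover have "(u ^ j) ^ 3 = (u ^ 3) ^ j"
    by (simp flip: power_mult add: mult.commute)
  ultimately show False
    using minus_one by simp
qed

lemma algebraic_int_if_eigenvalue_of_int_mat: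
  fixes x :: "'a :: field_char_0"
  assumes M: "M \<in> carrier_mat n n" and "eigenvalue (map_mat of_int M) x"
  shows "algebraic_int x"
proof -
  have "poly (map_poly of_int (char_poly M)) x = 0"
    using eigenvalue_root_char_poly[of "map_mat of_int M :: 'a mat" n] assms
    by (simp add: of_int_hom.char_poly_hom[OF M])
  moreover have "lead_coeff (char_poly M) = 1"
    using degree_monic_char_poly[OF M] by simp
  ultimately show ?thesis
    unfolding algebraic_int_altdef_ipoly by blast
qed

locale root_of_unity =
  fixes w :: "'a :: field_char_0" and D :: nat
  assumes root: "w ^ D = 1" and order_pos: "0 < D"
begin

text \<open>\<open>ints\<close> is the ring \<open>\<int>[w]\<close>, spanned by \<open>w\<^sup>0, \<dots>, w\<^sup>D\<^sup>-\<^sup>1\<close> because \<open>w\<^sup>D = 1\<close>;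
  \<open>evens\<close> is its ideal \<open>2\<int>[w]\<close>.\<close>
definition ints :: "'a set" where
  "ints = {\<Sum>l<D. of_int (c l) * w ^ l | c. True}"

definition evens :: "'a set" where
  "evens = (\<lambda>y. 2 * y) ` ints"

lemma intsI: "x = (\<Sum>l<D. of_int (c l) * w ^ l) \<Longrightarrow> x \<in> ints"
  unfolding ints_def by blast

lemma ints_zero [intro]: "0 \<in> ints"
  by (rule intsI[of _ "\<lambda>_. 0"]) simp

lemma ints_add [intro]:
  assumes "x \<in> ints" and "y \<in> ints"
  shows "x + y \<in> ints"
proof -
  obtain c d where "x = (\<Sum>l<D. of_int (c l) * w ^ l)" and "y = (\<Sum>l<D. of_int (d l) * w ^ l)"
    using assms unfolding ints_def by blast
  then have "x + y = (\<Sum>l<D. of_int (c l + d l) * w ^ l)"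
    by (simp add: sum.distrib algebra_simps)
  then show ?thesis
    by (rule intsI)
qed

lemma ints_of_int_mult [intro]:
  assumes "x \<in> ints"
  shows "of_int z * x \<in> ints"
proof -
  obtain c where "x = (\<Sum>l<D. of_int (c l) * w ^ l)"
    using assms unfolding ints_def by blast
  then have "of_int z * x = (\<Sum>l<D. of_int (z * c l) * w ^ l)"
    by (simp add: sum_distrib_left mult.assoc)
  then show ?thesis
    by (rule intsI)
qed

lemma ints_uminus [intro]: "x \<in> ints \<Longrightarrow> - x \<in> ints"
  using ints_of_int_mult[of x "- 1"] by simp

lemma ints_diff [intro]: "x \<in> ints \<Longrightarrow> y \<in> ints \<Longrightarrow> x - y \<in> ints"
  using ints_add[of x "- y"] by auto

lemma ints_sum [intro]: "(\<And>i. i \<in> S \<Longrightarrow> f i \<in> ints) \<Longrightarrow> sum f S \<in> ints"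
  by (induction S rule: infinite_finite_induct) auto

lemma w_power_in_ints [intro]: "w ^ j \<in> ints"
proof (rule intsI)
  have "w ^ j = (w ^ D) ^ (j div D) * w ^ (j mod D)"
    by (simp flip: power_mult power_add)
  also have "\<dots> = (\<Sum>l<D. (if l = j mod D then w ^ l else 0))"
    using root order_pos by (simp add: sum.delta)
  also have "\<dots> = (\<Sum>l<D. of_int (if l = j mod D then 1 else 0) * w ^ l)"
    by (rule sum.cong) auto
  finally show "w ^ j = \<dots>" .
qed

lemma w_in_ints [intro]: "w \<in> ints"
  using w_power_in_ints[of 1] by simp

lemma ints_mult [intro]:
  assumes "x \<in> ints" and "y \<in> ints"
  shows "x * y \<in> ints"
proof -
  obtain c d where "x = (\<Sum>l<D. of_int (c l) * w ^ l)" and "y = (\<Sum>m<D. of_int (d m) * w ^ m)"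
    using assms unfolding ints_def by blast
  then have "x * y = (\<Sum>l<D. \<Sum>m<D. of_int (c l * d m) * w ^ (l + m))"
    by (simp add: sum_product algebra_simps power_add)
  also have "\<dots> \<in> ints"
    by blast
  finally show ?thesis .
qed

lemma ints_of_int [intro]: "of_int z \<in> ints"
  using ints_of_int_mult[OF w_power_in_ints[of 0]] by simp

lemma ints_one [intro]: "1 \<in> ints"
  using ints_of_int[of 1] by simp

lemma ints_numeral [intro]: "numeral k \<in> ints"
  using ints_of_int[of "numeral k"] by simp

lemma ints_power [intro]: "x \<in> ints \<Longrightarrow> x ^ j \<in> ints"
  by (induction j) auto

text \<open>Multiplication by \<open>x\<close> acts on the vector \<open>(w\<^sup>0, \<dots>, w\<^sup>D\<^sup>-\<^sup>1)\<close> through an integer matrix.\<close>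
lemma ints_algebraic_int:
  assumes "x \<in> ints"
  shows "algebraic_int x"
proof -
  have "\<exists>c. x * w ^ i = (\<Sum>l<D. of_int (c l) * w ^ l)" for i
    using ints_mult[OF assms w_power_in_ints] unfolding ints_def by blast
  then obtain c :: "nat \<Rightarrow> nat \<Rightarrow> int"
    where c: "\<And>i. x * w ^ i = (\<Sum>l<D. of_int (c i l) * w ^ l)"
    by metis
  define M where "M = mat D D (\<lambda>(i, l). c i l)"
  define e where "e = vec D (\<lambda>l. w ^ l)"
  have M: "M \<in> carrier_mat D D"
    by (simp add: M_def)
  have "eigenvector (map_mat of_int M) e x"
    unfolding eigenvector_def
  proof (intro conjI)
    show "e \<in> carrier_vec (dim_row (map_mat of_int M))"
      by (simp add: M_def e_def)
    have "e $ 0 \<noteq> 0"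
      using order_pos by (simp add: e_def)
    then show "e \<noteq> 0\<^sub>v (dim_row (map_mat of_int M))"
      using order_pos by (auto simp: M_def)
    show "map_mat of_int M *\<^sub>v e = x \<cdot>\<^sub>v e"
    proof (rule eq_vecI)
      fix i assume "i < dim_vec (x \<cdot>\<^sub>v e)"
      then have i: "i < D"
        by (simp add: e_def)
      have "(map_mat of_int M *\<^sub>v e) $ i = (\<Sum>l<D. of_int (c i l) * w ^ l)"
        using i by (auto simp: M_def e_def scalar_prod_def atLeast0LessThan intro!: sum.cong)
      also have "\<dots> = (x \<cdot>\<^sub>v e) $ i"
        using i by (simp add: c[symmetric] e_def)
      finally show "(map_mat of_int M *\<^sub>v e) $ i = (x \<cdot>\<^sub>v e) $ i" .
    qed (simp add: M_def e_def)
  qed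
  then show ?thesis
    using algebraic_int_if_eigenvalue_of_int_mat[OF M] unfolding eigenvalue_def by blast
qed

lemma evensI [intro]: "y \<in> ints \<Longrightarrow> 2 * y \<in> evens"
  unfolding evens_def by blast

lemma evensE [elim]:
  assumes "x \<in> evens"
  obtains y where "y \<in> ints" and "x = 2 * y"
  using assms unfolding evens_def by blast

lemma evens_add [intro]: "x \<in> evens \<Longrightarrow> y \<in> evens \<Longrightarrow> x + y \<in> evens"
  by (elim evensE) (metis distrib_left evensI ints_add)

lemma evens_uminus [intro]: "x \<in> evens \<Longrightarrow> - x \<in> evens"
  by (elim evensE) (metis evensI ints_uminus mult_minus_right)

lemma evens_diff [intro]: "x \<in> evens \<Longrightarrow> y \<in> evens \<Longrightarrow> x - y \<in> evens"
  using evens_add[of x "- y"] by auto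

lemma evens_mult [intro]: "x \<in> evens \<Longrightarrow> y \<in> ints \<Longrightarrow> x * y \<in> evens"
  by (elim evensE) (metis evensI ints_mult mult.assoc)

lemma evens_sum [intro]: "(\<And>i. i \<in> S \<Longrightarrow> f i \<in> evens) \<Longrightarrow> sum f S \<in> evens"
  using evensI[OF ints_zero] by (induction S rule: infinite_finite_induct) auto

text \<open>If \<open>r = 2y\<close> with \<open>y \<in> \<int>[w]\<close>, then \<open>y = r/2\<close> is a rational algebraic integer.\<close>
lemma of_int_in_evens_iff: "of_int r \<in> evens \<longleftrightarrow> even r"
proof
  assume "of_int r \<in> evens"
  then obtain y where "y \<in> ints" and y: "of_int r = 2 * y"
    by blast
  moreover have "y \<in> \<rat>"
    using y by (metis Rats_divide Rats_number_of Rats_of_int nonzero_mult_div_cancel_left zero_neq_numeral)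
  ultimately have "y \<in> \<int>"
    by (intro rational_algebraic_int_is_int ints_algebraic_int)
  then obtain s where "y = of_int s"
    by (elim Ints_cases)
  with y have "of_int r = (of_int (2 * s) :: 'a)"
    by simp
  then show "even r"
    by (simp only: of_int_eq_iff) simp
next
  assume "even r"
  then show "of_int r \<in> evens"
    using evensI[OF ints_of_int] by (auto elim!: evenE)
qed

lemma one_notin_evens: "1 \<notin> evens"
  using of_int_in_evens_iff[of 1] by simp

lemma evens_cancel_odd:
  assumes "odd r" and "x \<in> ints" and "of_int r * x \<in> evens"
  shows "x \<in> evens"
proof -
  obtain s where "r = 2 * s + 1"
    using assms(1) by (elim oddE)
  then have "x = of_int r * x - 2 * (of_int s * x)"
    by (simp add: algebra_simps)
  also have "\<dots> \<in> evens"
    using assms(2,3) by blast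
  finally show ?thesis .
qed

lemma evens_cancel_w_power:
  assumes "w ^ j * x \<in> evens"
  shows "x \<in> evens"
proof -
  have "w ^ (D * j - j) * w ^ j = (w ^ D) ^ j"
    using order_pos by (simp flip: power_add power_mult)
  then have "w ^ (D * j - j) * w ^ j = 1"
    by (simp add: root)
  then have "x = (w ^ j * x) * w ^ (D * j - j)"
    by (simp add: algebra_simps)
  also have "\<dots> \<in> evens"
    using assms by blast
  finally show ?thesis .
qed

lemma power_minus_one_in_evens:
  assumes "z \<in> ints" and "z - 1 \<in> evens"
  shows "z ^ j - 1 \<in> evens"
proof (induction j)
  case 0
  show ?case
    using evensI[OF ints_zero] by simp
next
  case (Suc j)
  have "z ^ Suc j - 1 = (z ^ j - 1) * z + (z - 1)"
    by (simp add: algebra_simps)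
  also have "\<dots> \<in> evens"
    using Suc assms by blast
  finally show ?case .
qed

text \<open>If \<open>z \<noteq> 1\<close> then \<open>0 = (\<Sum>i<e. z\<^sup>i) \<equiv> e\<close> modulo \<open>2\<close>.\<close>
lemma eq_one_if_odd_order:
  assumes "z \<in> ints" and "z - 1 \<in> evens" and "z ^ e = 1" and "odd e"
  shows "z = 1"
proof (rule ccontr)
  assume "z \<noteq> 1"
  then have "(\<Sum>i<e. z ^ i) = 0"
    using sum_gp_strict[of z e] assms(3) by simp
  then have "of_int (int e) = - (\<Sum>i<e. z ^ i - 1)"
    by (simp add: sum_subtractf)
  also have "\<dots> \<in> evens"
    using power_minus_one_in_evens[OF assms(1,2)] by blast
  finally show False
    using assms(4) of_int_in_evens_iff[of "int e"] by simp
qed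

text \<open>If \<open>z\<^sup>2 = -1\<close> and \<open>z - 1 = 2y\<close> then \<open>-2z = (z - 1)\<^sup>2 = 4y\<^sup>2\<close>, so \<open>1 = 2 y\<^sup>2 z\<close>.\<close>
lemma square_eq_one_if_fourth_power:
  assumes "z \<in> ints" and "z - 1 \<in> evens" and "z ^ 4 = 1"
  shows "z ^ 2 = 1"
proof (rule ccontr)
  assume "z ^ 2 \<noteq> 1"
  moreover have "(z ^ 2 - 1) * (z ^ 2 + 1) = 0"
    using assms(3) by (simp add: algebra_simps flip: power_add)
  ultimately have z2: "z ^ 2 = - 1"
    by (simp add: eq_neg_iff_add_eq_0)
  obtain y where y: "y \<in> ints" "z - 1 = 2 * y"
    using assms(2) by blast
  have "4 * y ^ 2 = (z - 1) ^ 2"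
    by (simp add: y(2) power2_eq_square)
  also have "\<dots> = z ^ 2 - 2 * z + 1"
    by (simp add: power2_eq_square algebra_simps)
  also have "\<dots> = - 2 * z"
    using z2 by simp
  finally have "4 * y ^ 2 * z = - 2 * z * z"
    by (rule arg_cong[where f = "\<lambda>u. u * z"])
  then have "2 * (2 * (y ^ 2 * z)) = - 2 * z ^ 2"
    by (simp add: power2_eq_square algebra_simps)
  then have "1 = 2 * (y ^ 2 * z)"
    using z2 by (simp add: mult.commute)
  also have "\<dots> \<in> evens"
    using assms(1) y(1) by blast
  finally show False
    using one_notin_evens by simp
qed

lemma square_eq_one_if_root_of_unity:
  assumes "z \<in> ints" and "z - 1 \<in> evens" and "z ^ m = 1" and "0 < m"
  shows "z ^ 2 = 1"
  using assms
proof (induction m arbitrary: z rule: less_induct)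
  case (less m)
  show ?case
  proof (cases "even m")
    case True
    then obtain m' where m': "m = 2 * m'"
      by blast
    have "(z ^ 2) ^ m' = 1" and "m' < m" and "0 < m'"
      using less.prems m' by (simp_all add: power_mult)
    moreover have "z ^ 2 - 1 \<in> evens"
      using less.prems(1,2) by (rule power_minus_one_in_evens)
    ultimately have "(z ^ 2) ^ 2 = 1"
      using less.IH less.prems(1) by blast
    then show ?thesis
      using less.prems(1,2) by (intro square_eq_one_if_fourth_power) (simp_all flip: power_mult)
  next
    case False
    then show ?thesis
      using eq_one_if_odd_order[OF less.prems(1-3)] by simp
  qed
qed

lemma relation_with_minus_one_impossible:
  assumes "1 \<le> n" and "w ^ (4 * N - 2) = - 1"
    and rel: "2 ^ n * (w ^ 4 + 1) + 2 * (2 ^ n - 1) * w ^ 2 = 0"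
  shows False
proof (cases "n = 1")
  case True
  then have "2 * ((w ^ 2) ^ 2 + w ^ 2 + 1) = 0"
    using rel by (simp add: algebra_simps flip: power_mult)
  then have "(w ^ 2) ^ 2 + w ^ 2 + 1 = 0"
    by (simp only: mult_eq_0_iff) simp
  then have "(w ^ 2) ^ (2 * N - 1) \<noteq> - 1"
    by (rule power_neq_minus_one_if_cube_root)
  moreover have "(w ^ 2) ^ (2 * N - 1) = - 1"
    using assms(2) by (simp add: right_diff_distrib' flip: power_mult)
  ultimately show False
    by contradiction
next
  case False
  then have "\<exists>m. n = m + 2"
    using assms(1) by presburger
  then obtain m where m: "n = m + 2"
    by blast
  have "2 * (2 * (2 ^ m * (w ^ 4 + 1)) + (2 ^ n - 1) * w ^ 2) = 0"
    using rel unfolding m by (simp add: algebra_simps)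
  then have "2 * (2 ^ m * (w ^ 4 + 1)) + (2 ^ n - 1) * w ^ 2 = 0"
    by (simp only: mult_eq_0_iff) simp
  then have "of_int (2 ^ n - 1) * (w ^ 2 * 1) = 2 * - (2 ^ m * (w ^ 4 + 1))"
    by (simp add: eq_neg_iff_add_eq_0 add.commute)
  also have "\<dots> \<in> evens"
    by (intro evensI ints_uminus ints_mult ints_add ints_power ints_numeral w_in_ints ints_one)
  finally have "w ^ 2 * 1 \<in> evens"
    by (rule evens_cancel_odd[rotated 2]) (auto simp: m)
  then show False
    using evens_cancel_w_power one_notin_evens by auto
qed

lemma fourth_power_eq_one_if_relation:
  assumes "1 \<le> n" and "1 \<le> N"
    and rel: "2 ^ n * (w ^ (4 * N + 2) - 1) + (2 ^ n - 1) * (w ^ 2 * (w ^ (4 * N - 2) - 1)) = 0"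
  shows "w ^ 4 = 1"
proof -
  define v where "v = w ^ (4 * N - 2)"
  have "w ^ (4 * N + 2) = v * w ^ 4"
    using assms(2) by (simp add: v_def flip: power_add)
  with rel have rel_v: "2 ^ n * (v * w ^ 4 - 1) + (2 ^ n - 1) * (w ^ 2 * (v - 1)) = 0"
    by (simp add: v_def)
  obtain m where m: "n = Suc m"
    using assms(1) by (cases n) auto
  have "of_int (2 ^ n - 1) * (w ^ 2 * (v - 1)) = 2 * - (2 ^ m * (v * w ^ 4 - 1))"
    using rel_v unfolding m by (simp add: algebra_simps eq_neg_iff_add_eq_0)
  also have "\<dots> \<in> evens"
    unfolding v_def by (intro evensI ints_uminus ints_mult ints_diff ints_power ints_numeral w_in_ints ints_one)
  finally have "w ^ 2 * (v - 1) \<in> evens"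
    by (rule evens_cancel_odd[rotated 2]) (auto simp: m v_def)
  then have "v - 1 \<in> evens"
    by (rule evens_cancel_w_power)
  moreover have "v ^ D = (w ^ D) ^ (4 * N - 2)"
    unfolding v_def by (simp only: mult.commute flip: power_mult)
  then have "v ^ D = 1"
    by (simp add: root)
  ultimately have "v ^ 2 = 1"
    using order_pos by (rule square_eq_one_if_root_of_unity[rotated]) (auto simp: v_def)
  then consider "v = 1" | "v = - 1"
    by (metis power2_eq_1_iff)
  then show ?thesis
  proof cases
    case 1
    then show ?thesis
      using rel_v by simp
  next
    case 2
    then have "- (2 ^ n * (w ^ 4 + 1) + 2 * (2 ^ n - 1) * w ^ 2) = 0"
      using rel_v by (simp add: algebra_simps)
    then have "2 ^ n * (w ^ 4 + 1) + 2 * (2 ^ n - 1) * w ^ 2 = 0"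
      by (simp only: neg_equal_0_iff_equal)
    moreover have "w ^ (4 * N - 2) = - 1"
      using 2 by (simp add: v_def)
    ultimately show ?thesis
      using relation_with_minus_one_impossible[OF assms(1)] by blast
  qed
qed

end

lemma cis_double_minus_one: "cis (2 * x) - 1 = 2 * \<i> * cis x * complex_of_real (sin x)"
proof -
  have "sin (2 * x) = 2 * sin x * cos x" and "cos (2 * x) = 1 - 2 * (sin x)\<^sup>2"
    by (simp_all add: sin_double cos_double_sin)
  then show ?thesis
    by (simp add: complex_eq_iff power2_eq_square algebra_simps)
qed

lemma cis_double_combination:
  fixes A B t \<theta> :: real
  shows "A * (cis (2 * (\<theta> + t)) - 1) + B * (cis (2 * t) * (cis (2 * (\<theta> - t)) - 1))
    = 2 * \<i> * cis (\<theta> + t) * complex_of_real (A * sin (\<theta> + t) + B * sin (\<theta> - t))"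
proof -
  have "cis (2 * t) * (cis (2 * (\<theta> - t)) - 1)
      = 2 * \<i> * (cis (2 * t) * cis (\<theta> - t)) * complex_of_real (sin (\<theta> - t))"
    unfolding cis_double_minus_one by (simp only: mult_ac)
  also have "cis (2 * t) * cis (\<theta> - t) = cis (\<theta> + t)"
    by (simp add: cis_mult add.commute)
  finally have minus: "cis (2 * t) * (cis (2 * (\<theta> - t)) - 1)
      = 2 * \<i> * cis (\<theta> + t) * complex_of_real (sin (\<theta> - t))" .
  show ?thesis
    unfolding minus unfolding cis_double_minus_one by (simp add: algebra_simps)
qed

lemma sin_combination_if_tan_relation:
  fixes A t \<theta> :: real
  assumes "cos t \<noteq> 0" and "tan t \<noteq> 0" and "2 * A - 1 \<noteq> 0"
    and rel: "- (1 / (2 * A - 1)) * tan t = tan \<theta>"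
  shows "A * sin (\<theta> + t) + (A - 1) * sin (\<theta> - t) = 0"
proof -
  have "cos \<theta> \<noteq> 0"
    using assms by (auto simp: tan_def)
  have "tan t = - ((2 * A - 1) * tan \<theta>)"
    using rel assms(3) by (auto simp: field_simps)
  then have "sin t / cos t = - ((2 * A - 1) * (sin \<theta> / cos \<theta>))"
    by (simp add: tan_def)
  then have "sin t * cos \<theta> = - ((2 * A - 1) * (sin \<theta> * cos t))"
    using \<open>cos \<theta> \<noteq> 0\<close> assms(1) by (simp add: field_simps)
  then show ?thesis
    by (simp add: sin_add sin_diff algebra_simps)
qed

theorem lemma23:
  fixes n N :: nat and k :: real
  assumes "n \<ge> 1" and "N \<ge> 1"
    and "0 < k" and "k < pi"
    and "- (1 / (2 ^ (n + 1) - 1)) * tan (k / 2) = tan (real N * k)"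
  shows "k / pi \<notin> \<rat>"
proof
  assume "k / pi \<in> \<rat>"
  then obtain a b :: int where "0 < b" and ab: "k / pi = of_int a / of_int b"
    by (metis Rats_cases')
  define w where "w = cis (k / 2)"
  have w_power: "w ^ j = cis (real j * (k / 2))" for j
    unfolding w_def by (rule Complex.DeMoivre)
  interpret root_of_unity w "nat (4 * b)"
  proof
    have "real (nat (4 * b)) * (k / 2) = 2 * pi * of_int a"
      using ab \<open>0 < b\<close> by (simp add: field_simps)
    then show "w ^ nat (4 * b) = 1"
      by (simp only: w_power) simp
    show "0 < nat (4 * b)"
      using \<open>0 < b\<close> by simp
  qed
  have "0 < tan (k / 2)" and "0 < cos (k / 2)"
    using assms(3,4) by (auto intro!: tan_gt_zero cos_gt_zero)
  moreover have "2 * 2 ^ n - 1 \<noteq> (0 :: real)"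
    using one_le_power[of "2 :: real" n] by linarith
  ultimately have "2 ^ n * sin (real N * k + k / 2) + (2 ^ n - 1) * sin (real N * k - k / 2) = 0"
    using assms(5) by (intro sin_combination_if_tan_relation) auto
  moreover have w_powers: "w ^ (4 * N + 2) = cis (2 * (real N * k + k / 2))"
    "w ^ 2 = cis (2 * (k / 2))" "w ^ (4 * N - 2) = cis (2 * (real N * k - k / 2))"
    using assms(2) by (simp_all only: w_power) (simp_all add: of_nat_diff algebra_simps)
  ultimately have "2 ^ n * (w ^ (4 * N + 2) - 1) + (2 ^ n - 1) * (w ^ 2 * (w ^ (4 * N - 2) - 1)) = 0"
    using cis_double_combination[of "2 ^ n" "real N * k" "k / 2" "2 ^ n - 1"]
    unfolding w_powers by simp
  then have "w ^ 4 = 1"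
    using assms(1,2) by (rule fourth_power_eq_one_if_relation[rotated 2])
  then have "cos (2 * k) = 1"
    by (simp add: w_power complex_eq_iff)
  then have "sin k = 0"
    by (simp add: cos_double_sin)
  then show False
    using sin_gt_zero[OF assms(3,4)] by simp
qed

end
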